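(* Let $\mathbb{F}$ be a field, $p,q\in\mathbb{F}[t]$ monic of degree $2$, and $\mathcal{W}_{p,q}=\mathbb{F}\langle a,b\rangle/(p(a),q(b))$. An element $x\in\mathcal{W}_{p,q}$ is invertible if and only if $N(x)\in\mathbb{F}^\times$, where $N(x)=xx^\star$.
   Context: $\mathcal{W}_{p,q}$ is the free associative unital $\mathbb{F}$-algebra on two generators modulo the ideal generated by $p(a),q(b)$. For a $2$-dimensional algebra set $x^\star=\mathrm{tr}(x)-x$; the adjunction $x\mapsto x^\star$ of $\mathcal{W}_{p,q}$ is the unique $\mathbb{F}$-linear anti-automorphism agreeing with this on $\mathbb{F}[a]$ and $\mathbb{F}[b]$ (so $a^\star=\mathrm{tr}(p)-a$, $b^\star=\mathrm{tr}(q)-b$). The norm $N(x)=xx^\star=x^\star x$ lies in the center $\mathbb{F}[\omega]$, $\omega=ab^\star+ba^\star$, and is multiplicative. *)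

theory Defs
  imports "HOL-Computational_Algebra.Polynomial"
begin

text \<open>The free associative unital algebra F<a,b> is modelled by finitely supported
  coefficient functions on words over the alphabet bool (False = a, True = b).
  The quotient W_{p,q} = F<a,b>/(p(a),q(b)) is handled through the two-sided ideal
  generated by p(a) and q(b): elements of W are represented by free-algebra elements,
  equal in W iff their difference lies in the ideal.\<close>

type_synonym 'a fa = "bool list \<Rightarrow> 'a"

definition fin_supp :: "'a::zero fa \<Rightarrow> bool" where
  "fin_supp f \<longleftrightarrow> finite {w. f w \<noteq> 0}"

definition fone :: "'a::{zero,one} fa" where
  "fone = (\<lambda>w. if w = [] then 1 else 0)"

definition fscal :: "'a::zero \<Rightarrow> 'a fa" where
  "fscal c = (\<lambda>w. if w = [] then c else 0)"

definition fletter :: "bool \<Rightarrow> 'a::{zero,one} fa" where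
  "fletter l = (\<lambda>w. if w = [l] then 1 else 0)"

definition fadd :: "'a::plus fa \<Rightarrow> 'a fa \<Rightarrow> 'a fa" where
  "fadd f g = (\<lambda>w. f w + g w)"

definition fsub :: "'a::minus fa \<Rightarrow> 'a fa \<Rightarrow> 'a fa" where
  "fsub f g = (\<lambda>w. f w - g w)"

definition fmul :: "'a::comm_semiring_0 fa \<Rightarrow> 'a fa \<Rightarrow> 'a fa" where
  "fmul f g = (\<lambda>w. \<Sum>i\<le>length w. f (take i w) * g (drop i w))"

fun fpow :: "'a::comm_semiring_1 fa \<Rightarrow> nat \<Rightarrow> 'a fa" where
  "fpow f 0 = fone"
| "fpow f (Suc n) = fmul f (fpow f n)"

definition fpeval :: "'a::comm_semiring_1 poly \<Rightarrow> bool \<Rightarrow> 'a fa" where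
  "fpeval p l = (\<lambda>w. \<Sum>i\<le>degree p. coeff p i * fpow (fletter l) i w)"

inductive_set wideal :: "'a::comm_ring_1 poly \<Rightarrow> 'a poly \<Rightarrow> 'a fa set"
  for p q where
  zero: "(\<lambda>w. 0) \<in> wideal p q"
| gen_a: "fpeval p False \<in> wideal p q"
| gen_b: "fpeval q True \<in> wideal p q"
| add: "f \<in> wideal p q \<Longrightarrow> g \<in> wideal p q \<Longrightarrow> fadd f g \<in> wideal p q"
| mult_left: "fin_supp r \<Longrightarrow> f \<in> wideal p q \<Longrightarrow> fmul r f \<in> wideal p q"
| mult_right: "fin_supp r \<Longrightarrow> f \<in> wideal p q \<Longrightarrow> fmul f r \<in> wideal p q"

definition w_invertible :: "'a::comm_ring_1 poly \<Rightarrow> 'a poly \<Rightarrow> 'a fa \<Rightarrow> bool" where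
  "w_invertible p q x \<longleftrightarrow> (\<exists>y. fin_supp y \<and>
      fsub (fmul x y) fone \<in> wideal p q \<and> fsub (fmul y x) fone \<in> wideal p q)"

text \<open>Adjunction: a^* = tr(p) - a, b^* = tr(q) - b, where for monic quadratic
  p = t^2 + p_1 t + p_0 the trace of t in F[t]/(p) is -p_1; extended as an
  anti-automorphism.\<close>
definition lstar :: "'a::comm_ring_1 poly \<Rightarrow> 'a poly \<Rightarrow> bool \<Rightarrow> 'a fa" where
  "lstar p q l = fsub (fscal (- coeff (if l then q else p) 1)) (fletter l)"

fun wstar :: "'a::comm_ring_1 poly \<Rightarrow> 'a poly \<Rightarrow> bool list \<Rightarrow> 'a fa" where
  "wstar p q [] = fone"
| "wstar p q (l # w) = fmul (wstar p q w) (lstar p q l)"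

definition fstar :: "'a::comm_ring_1 poly \<Rightarrow> 'a poly \<Rightarrow> 'a fa \<Rightarrow> 'a fa" where
  "fstar p q x = (\<lambda>v. \<Sum>w\<in>{w. x w \<noteq> 0}. x w * wstar p q w v)"

definition wnorm :: "'a::comm_ring_1 poly \<Rightarrow> 'a poly \<Rightarrow> 'a fa \<Rightarrow> 'a fa" where
  "wnorm p q x = fmul x (fstar p q x)"

end

theory Submission
  imports Defs "HOL-Library.Poly_Mapping"
begin

text \<open>
  The element \<open>\<omega> = a b\<^sup>\<star> + b a\<^sup>\<star>\<close> is central, and the algebra is spanned by
  \<open>1, a, b, a b\<close> over \<open>\<bbbF>[\<omega>]\<close>; hence every trace \<open>x + x\<^sup>\<star>\<close> lies in \<open>\<bbbF>[\<omega>]\<close>.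
  Norms of words are scalars and \<open>N(x + y) = N(x) + N(y) + tr(x y\<^sup>\<star>)\<close>, so every norm
  lies in \<open>\<bbbF>[\<omega>]\<close>, and \<open>x x\<^sup>\<star> = x\<^sup>\<star> x\<close>. If \<open>N(x) = c \<noteq> 0\<close> then \<open>c\<inverse> x\<^sup>\<star>\<close> is a
  two-sided inverse of \<open>x\<close>. Conversely, if \<open>x y = 1\<close> then \<open>N(y) N(x) = N(x y) = 1\<close> in
  \<open>\<bbbF>[\<omega>]\<close>, and a representation by \<open>2 \<times> 2\<close> matrices over \<open>\<bbbF>[t]\<close> in which \<open>\<omega>\<close> acts
  as a polynomial of degree 2 shows that \<open>\<bbbF>[\<omega>]\<close> is a polynomial ring, whose units are
  the nonzero constants.
\<close>

section \<open>Two-sided ideals and congruences in a ring\<close>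

inductive_set gen_ideal :: "'a::ring_1 set \<Rightarrow> 'a set" for G where
  generator: "g \<in> G \<Longrightarrow> g \<in> gen_ideal G"
| zero: "0 \<in> gen_ideal G"
| add: "x \<in> gen_ideal G \<Longrightarrow> y \<in> gen_ideal G \<Longrightarrow> x + y \<in> gen_ideal G"
| mult_left: "x \<in> gen_ideal G \<Longrightarrow> r * x \<in> gen_ideal G"
| mult_right: "x \<in> gen_ideal G \<Longrightarrow> x * r \<in> gen_ideal G"

lemma gen_ideal_uminus: "x \<in> gen_ideal G \<Longrightarrow> - x \<in> gen_ideal G"
  using gen_ideal.mult_left[of x G "- 1"] by simp

lemma gen_ideal_diff: "x \<in> gen_ideal G \<Longrightarrow> y \<in> gen_ideal G \<Longrightarrow> x - y \<in> gen_ideal G"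
  using gen_ideal.add[OF _ gen_ideal_uminus] by (metis diff_conv_add_uminus)

lemma hom_vanishes_on_gen_ideal:
  assumes add: "\<And>x y. f (x + y) = f x + f y" and mult: "\<And>x y. f (x * y) = f x * f y"
    and gen: "\<And>g. g \<in> G \<Longrightarrow> f g = (0::'b::ring)"
  shows "x \<in> gen_ideal G \<Longrightarrow> f x = 0"
proof (induction rule: gen_ideal.induct)
  case zero
  show ?case using add[of 0 0] by simp
qed (simp_all add: gen add mult)

lemma anti_hom_preserves_gen_ideal:
  assumes add: "\<And>x y. f (x + y) = f x + f y" and mult: "\<And>x y. f (x * y) = f y * f x"
    and gen: "\<And>g. g \<in> G \<Longrightarrow> f g \<in> gen_ideal G"
  shows "x \<in> gen_ideal G \<Longrightarrow> f x \<in> gen_ideal G"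
proof (induction rule: gen_ideal.induct)
  case zero
  show ?case using add[of 0 0] gen_ideal.zero by simp
qed (simp_all add: gen add mult gen_ideal.add gen_ideal.mult_left gen_ideal.mult_right)

definition cong_mod :: "'a::ring_1 set \<Rightarrow> 'a \<Rightarrow> 'a \<Rightarrow> bool" where
  "cong_mod G x y \<longleftrightarrow> x - y \<in> gen_ideal G"

lemma cong_mod_refl [simp]: "cong_mod G x x"
  by (simp add: cong_mod_def gen_ideal.zero)

lemma cong_mod_sym: "cong_mod G x y \<Longrightarrow> cong_mod G y x"
  unfolding cong_mod_def by (metis gen_ideal_uminus minus_diff_eq)

lemma cong_mod_trans [trans]: "cong_mod G x y \<Longrightarrow> cong_mod G y z \<Longrightarrow> cong_mod G x z"
  unfolding cong_mod_def using gen_ideal.add by fastforce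

lemma cong_mod_add: "cong_mod G x x' \<Longrightarrow> cong_mod G y y' \<Longrightarrow> cong_mod G (x + y) (x' + y')"
  unfolding cong_mod_def by (metis gen_ideal.add add_diff_add)

lemma cong_mod_uminus: "cong_mod G x x' \<Longrightarrow> cong_mod G (- x) (- x')"
  unfolding cong_mod_def by (metis gen_ideal_uminus minus_diff_minus)

lemma cong_mod_diff: "cong_mod G x x' \<Longrightarrow> cong_mod G y y' \<Longrightarrow> cong_mod G (x - y) (x' - y')"
  using cong_mod_add[OF _ cong_mod_uminus] by (metis diff_conv_add_uminus)

lemma cong_mod_mult:
  assumes "cong_mod G x x'" "cong_mod G y y'"
  shows "cong_mod G (x * y) (x' * y')"
proof -
  have "(x - x') * y + x' * (y - y') \<in> gen_ideal G"
    using assms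
      unfolding cong_mod_def by (intro gen_ideal.add gen_ideal.mult_left gen_ideal.mult_right)
  moreover have "(x - x') * y + x' * (y - y') = x * y - x' * y'"
    by (simp add: algebra_simps)
  ultimately show ?thesis by (simp add: cong_mod_def)
qed

lemma cong_mod_generator: "g \<in> G \<Longrightarrow> cong_mod G g 0"
  by (simp add: cong_mod_def gen_ideal.generator)

definition central_mod :: "'a::ring_1 set \<Rightarrow> 'a \<Rightarrow> bool" where
  "central_mod G z \<longleftrightarrow> (\<forall>x. cong_mod G (z * x) (x * z))"

lemma central_modD: "central_mod G z \<Longrightarrow> cong_mod G (z * x) (x * z)"
  by (simp add: central_mod_def)

lemma central_modD': "central_mod G z \<Longrightarrow> cong_mod G (x * z) (z * x)"
  by (simp add: central_mod_def cong_mod_sym)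

lemma central_mod_commute: "(\<And>x. z * x = x * z) \<Longrightarrow> central_mod G z"
  by (simp add: central_mod_def)

lemma central_mod_add: "central_mod G z \<Longrightarrow> central_mod G z' \<Longrightarrow> central_mod G (z + z')"
  by (simp add: central_mod_def distrib_left distrib_right cong_mod_add)

lemma central_mod_mult:
  assumes z: "central_mod G z" and z': "central_mod G z'"
  shows "central_mod G (z * z')"
  unfolding central_mod_def
proof
  fix x
  have "z * z' * x = z * (z' * x)" by (simp add: mult.assoc)
  also have "cong_mod G \<dots> (z * (x * z'))" by (intro cong_mod_mult cong_mod_refl central_modD z')
  also have "\<dots> = (z * x) * z'" by (simp add: mult.assoc)
  also have "cong_mod G \<dots> ((x * z) * z')" by (intro cong_mod_mult cong_mod_refl central_modD z)
  finally show "cong_mod G (z * z' * x) (x * (z * z'))" by (simp add: mult.assoc)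
qed

lemma central_mod_cong:
  assumes "cong_mod G z z'" "central_mod G z"
  shows "central_mod G z'"
  unfolding central_mod_def
proof
  fix x
  have "cong_mod G (z' * x) (z * x)"
    by (intro cong_mod_mult cong_mod_sym[OF assms(1)] cong_mod_refl)
  also have "cong_mod G \<dots> (x * z)" by (rule central_modD[OF assms(2)])
  also have "cong_mod G \<dots> (x * z')" by (intro cong_mod_mult assms(1) cong_mod_refl)
  finally show "cong_mod G (z' * x) (x * z')" .
qed

section \<open>The free algebra on two letters\<close>

text \<open>Words over \<open>bool\<close> (\<open>False\<close> for \<open>a\<close>, \<open>True\<close> for \<open>b\<close>) with concatenation as
  \<open>monoid_add\<close> structure, so that \<open>bword \<Rightarrow>\<^sub>0 'a\<close> with the convolution product of
  Poly_Mapping is the free algebra \<open>\<bbbF>\<langle>a, b\<rangle>\<close>.\<close>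

datatype bword = BWord (letters: "bool list")

instantiation bword :: monoid_add
begin
definition zero_bword :: bword where "0 = BWord []"
definition plus_bword :: "bword \<Rightarrow> bword \<Rightarrow> bword" where "u + v = BWord (letters u @ letters v)"
instance by standard (auto simp: zero_bword_def plus_bword_def)
end

lemma letters_zero [simp]: "letters 0 = []"
  by (simp add: zero_bword_def)

lemma letters_plus [simp]: "letters (u + v) = letters u @ letters v"
  by (simp add: plus_bword_def)

lemma inj_letters: "inj letters"
  by (meson injI bword.expand)

type_synonym 'a falg = "bword \<Rightarrow>\<^sub>0 'a"

abbreviation scal :: "'a \<Rightarrow> ('k::zero \<Rightarrow>\<^sub>0 'a::zero)" where
  "scal c \<equiv> Poly_Mapping.single 0 c"

lemma lookup_scal_mult:
  fixes X :: "'k::monoid_add \<Rightarrow>\<^sub>0 'a::semiring_0"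
  shows "Poly_Mapping.lookup (scal c * X) k = c * Poly_Mapping.lookup X k"
proof -
  have "Poly_Mapping.lookup (scal c * X) k
      = Sum_any (\<lambda>l. (c * Sum_any (\<lambda>q. Poly_Mapping.lookup X q when k = l + q)) when 0 = l)"
    by (simp add: lookup_mult lookup_single when_mult)
  also have "\<dots> = c * Poly_Mapping.lookup X k" by (simp only: Sum_any_when_equal') simp
  finally show ?thesis .
qed

lemma lookup_mult_scal:
  fixes X :: "'k::monoid_add \<Rightarrow>\<^sub>0 'a::semiring_0"
  shows "Poly_Mapping.lookup (X * scal c) k = Poly_Mapping.lookup X k * c"
proof -
  have when_0: "Sum_any (\<lambda>l'. (c when 0 = l') when k = l + l') = (c when k = l)" for l
  proof -
    have "(\<lambda>l'. (c when 0 = l') when k = l + l') = (\<lambda>l'. (c when k = l) when l' = 0)"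
      by (auto simp: when_def fun_eq_iff)
    then show ?thesis by (simp only: Sum_any_when_equal)
  qed
  have "Poly_Mapping.lookup (X * scal c) k = Sum_any (\<lambda>l. Poly_Mapping.lookup X l * (c when k = l))"
    unfolding lookup_mult lookup_single when_0 ..
  also have "\<dots> = Sum_any (\<lambda>l. Poly_Mapping.lookup X l * c when k = l)" by (simp add: mult_when)
  also have "\<dots> = Poly_Mapping.lookup X k * c" by (simp only: Sum_any_when_equal')
  finally show ?thesis .
qed

lemma scal_mult_commute:
  fixes X :: "'k::monoid_add \<Rightarrow>\<^sub>0 'a::comm_semiring_0"
  shows "scal c * X = X * scal c"
  by (rule poly_mapping_eqI) (simp add: lookup_scal_mult lookup_mult_scal mult.commute)

lemma scal_mult_left_commute:
  fixes X :: "'k::monoid_add \<Rightarrow>\<^sub>0 'a::comm_semiring_0"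
  shows "X * (scal c * Y) = scal c * (X * Y)"
  by (metis mult.assoc scal_mult_commute)

lemma scal_mult: "scal a * scal b = (scal (a * b) :: 'k::monoid_add \<Rightarrow>\<^sub>0 'a::semiring_0)"
  by (simp add: mult_single)

lemma poly_mapping_sum_singles:
  "(X::'k \<Rightarrow>\<^sub>0 'a::comm_monoid_add)
    = (\<Sum>k\<in>Poly_Mapping.keys X. Poly_Mapping.single k (Poly_Mapping.lookup X k))"
  by (rule poly_mapping_eqI)
    (auto simp: lookup_sum lookup_single when_def in_keys_iff sum.delta[OF finite_keys]
      split: if_splits)

lemma poly_mapping_induct_single [case_names zero single add]:
  fixes X :: "'k \<Rightarrow>\<^sub>0 'a::comm_monoid_add"
  assumes "P 0" "\<And>k a. P (Poly_Mapping.single k a)" "\<And>X Y. P X \<Longrightarrow> P Y \<Longrightarrow> P (X + Y)"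
  shows "P X"
proof -
  have "P (\<Sum>k\<in>S. Poly_Mapping.single k (Poly_Mapping.lookup X k))" if "finite S" for S
    using that by (induction S rule: finite_induct) (auto intro: assms)
  then show ?thesis by (metis finite_keys poly_mapping_sum_singles)
qed

text \<open>Taking \<open>m\<close> to be the opposite product covers anti-homomorphisms.\<close>

lemma additive_mult_eq:
  fixes f :: "('k::monoid_add \<Rightarrow>\<^sub>0 'a::semiring_0) \<Rightarrow> 'b::ring"
  assumes add: "\<And>X Y. f (X + Y) = f X + f Y"
    and m_left: "\<And>x y z. m (x + y) z = m x z + m y z"
    and m_right: "\<And>x y z. m x (y + z) = m x y + m x z"
    and monomials: "\<And>k a l b. f (Poly_Mapping.single k a * Poly_Mapping.single l b)
                   = m (f (Poly_Mapping.single k a)) (f (Poly_Mapping.single l b))"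
  shows "f (X * Y) = m (f X) (f Y)"
proof -
  have f0: "f 0 = 0" using add[of 0 0] by simp
  have m0: "m 0 z = 0" "m z 0 = 0" for z using m_left[of 0 0 z] m_right[of z 0 0] by simp_all
  show ?thesis
  proof (induction X arbitrary: Y rule: poly_mapping_induct_single)
    case (single k a)
    show ?case
      by (induction Y rule: poly_mapping_induct_single)
        (simp_all add: f0 m0 monomials add m_right distrib_left)
  qed (simp_all add: f0 m0 add m_left distrib_right)
qed

definition lin_ext :: "('a \<Rightarrow> 'b) \<Rightarrow> ('k \<Rightarrow> 'b) \<Rightarrow> ('k \<Rightarrow>\<^sub>0 'a::zero) \<Rightarrow> 'b::semiring_0" where
  "lin_ext e h X = (\<Sum>k\<in>Poly_Mapping.keys X. e (Poly_Mapping.lookup X k) * h k)"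

lemma lin_ext_superset:
  assumes "e 0 = 0" "finite S" "Poly_Mapping.keys X \<subseteq> S"
  shows "lin_ext e h X = (\<Sum>k\<in>S. e (Poly_Mapping.lookup X k) * h k)"
  unfolding lin_ext_def by (rule sum.mono_neutral_left) (auto simp: assms in_keys_iff)

lemma lin_ext_add:
  assumes e0: "e 0 = 0" and e_add: "\<And>a b. e (a + b) = e a + e b"
  shows "lin_ext e h (X + Y) = lin_ext e h X + lin_ext e h Y"
proof -
  let ?S = "Poly_Mapping.keys X \<union> Poly_Mapping.keys Y"
  have "lin_ext e h (X + Y) = (\<Sum>k\<in>?S. e (Poly_Mapping.lookup (X + Y) k) * h k)"
    by (rule lin_ext_superset) (auto simp: e0 keys_add)
  also have "\<dots> = (\<Sum>k\<in>?S. e (Poly_Mapping.lookup X k) * h k)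
      + (\<Sum>k\<in>?S. e (Poly_Mapping.lookup Y k) * h k)"
    by (simp add: lookup_add e_add distrib_right sum.distrib)
  also have "\<dots> = lin_ext e h X + lin_ext e h Y"
    using lin_ext_superset[of e ?S X h] lin_ext_superset[of e ?S Y h] e0 by simp
  finally show ?thesis .
qed

lemma lin_ext_single: "e 0 = 0 \<Longrightarrow> lin_ext e h (Poly_Mapping.single k a) = e a * h k"
  by (subst lin_ext_superset[of e "{k}"]) (auto simp: lookup_single)

lemma lin_ext_zero: "lin_ext e h 0 = 0"
  by (simp add: lin_ext_def)

definition wmon :: "bool list \<Rightarrow> 'a::comm_ring_1 falg" where
  "wmon w = Poly_Mapping.single (BWord w) 1"

definition letter :: "bool \<Rightarrow> 'a::comm_ring_1 falg" where
  "letter l = Poly_Mapping.single (BWord [l]) 1"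

lemma wmon_Nil: "wmon [] = 1"
  by (simp add: wmon_def zero_bword_def[symmetric])

lemma wmon_append: "wmon (u @ v) = wmon u * wmon v"
  by (simp add: wmon_def mult_single plus_bword_def)

lemma wmon_Cons: "wmon (l # w) = letter l * wmon w"
  using wmon_append[of "[l]" w] by (simp add: wmon_def letter_def)

lemma single_eq_scal_wmon: "Poly_Mapping.single k a = scal a * wmon (letters k)"
  by (simp add: wmon_def mult_single)

locale central_hom =
  fixes e :: "'a::comm_ring_1 \<Rightarrow> 'b::ring_1"
  assumes add: "e (a + b) = e a + e b" and mult: "e (a * b) = e a * e b" and one: "e 1 = 1"
    and central: "e a * y = y * e a"
begin

lemma zero: "e 0 = 0"
  using add[of 0 0] by simp

definition eval :: "(bool \<Rightarrow> 'b) \<Rightarrow> 'a falg \<Rightarrow> 'b" where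
  "eval L = lin_ext e (\<lambda>k. prod_list (map L (letters k)))"

lemma eval_zero: "eval L 0 = 0"
  by (simp add: eval_def lin_ext_zero)

lemma eval_add: "eval L (X + Y) = eval L X + eval L Y"
  by (simp add: eval_def lin_ext_add zero add)

lemma eval_diff: "eval L (X - Y) = eval L X - eval L Y"
  using eval_add[of L "X - Y" Y] by (simp add: eq_diff_eq)

lemma eval_uminus: "eval L (- X) = - eval L X"
  using eval_diff[of L 0 X] by (simp add: eval_zero)

lemma eval_single: "eval L (Poly_Mapping.single k a) = e a * prod_list (map L (letters k))"
  by (simp add: eval_def lin_ext_single zero)

lemma eval_mult: "eval L (X * Y) = eval L X * eval L Y"
proof (rule additive_mult_eq[where f = "eval L"])
  fix k a l b
  let ?w = "\<lambda>k. prod_list (map L (letters k))"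
  have "eval L (Poly_Mapping.single k a * Poly_Mapping.single l b) = e a * (e b * ?w k) * ?w l"
    by (simp add: eval_single mult_single mult mult.assoc)
  also have "\<dots> = (e a * ?w k) * (e b * ?w l)"
    by (simp add: central[of b] mult.assoc)
  finally show "eval L (Poly_Mapping.single k a * Poly_Mapping.single l b)
      = eval L (Poly_Mapping.single k a) * eval L (Poly_Mapping.single l b)"
    by (simp add: eval_single)
qed (simp_all add: eval_add algebra_simps)

lemma eval_scal: "eval L (scal c) = e c"
  by (simp add: eval_single)

lemma eval_one: "eval L 1 = 1"
  using eval_scal[of L 1] by (simp add: one)

lemma eval_letter: "eval L (letter l) = L l"
  by (simp add: letter_def eval_single one)

lemma eval_gen_ideal:
  assumes "\<And>g. g \<in> G \<Longrightarrow> eval L g = 0"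
  shows "cong_mod G X Y \<Longrightarrow> eval L X = eval L Y"
  using hom_vanishes_on_gen_ideal[of "eval L" G "X - Y"] assms
  by (simp add: cong_mod_def eval_add eval_mult eval_diff)

end

definition falg_star :: "(bool \<Rightarrow> 'a falg) \<Rightarrow> 'a::comm_ring_1 falg \<Rightarrow> 'a falg" where
  "falg_star L = lin_ext scal (\<lambda>k. prod_list (rev (map L (letters k))))"

lemma falg_star_add: "falg_star L (X + Y) = falg_star L X + falg_star L Y"
  by (simp add: falg_star_def lin_ext_add single_add)

lemma falg_star_diff: "falg_star L (X - Y) = falg_star L X - falg_star L Y"
  using falg_star_add[of L "X - Y" Y] by (simp add: eq_diff_eq)

lemma falg_star_single:
  "falg_star L (Poly_Mapping.single k a) = scal a * prod_list (rev (map L (letters k)))"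
  by (simp add: falg_star_def lin_ext_single)

lemma falg_star_zero [simp]: "falg_star L 0 = 0"
  by (simp add: falg_star_def lin_ext_zero)

lemma falg_star_mult: "falg_star L (X * Y) = falg_star L Y * falg_star L X"
proof (rule additive_mult_eq[where f = "falg_star L" and m = "\<lambda>x y. y * x"])
  fix k a l b
  let ?w = "\<lambda>k. prod_list (rev (map L (letters k)))"
  have "(scal b * ?w l) * (scal a * ?w k) = scal a * (scal b * ?w l * ?w k)"
    by (rule scal_mult_left_commute)
  also have "\<dots> = scal (a * b) * (?w l * ?w k)"
    by (simp add: mult.assoc[symmetric] scal_mult)
  finally show "falg_star L (Poly_Mapping.single k a * Poly_Mapping.single l b)
      = falg_star L (Poly_Mapping.single l b) * falg_star L (Poly_Mapping.single k a)"
    by (simp add: falg_star_single mult_single)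
qed (simp_all add: falg_star_add algebra_simps)

lemma falg_star_scal: "falg_star L (scal c) = scal c"
  by (simp add: falg_star_single)

lemma falg_star_one: "falg_star L 1 = 1"
  using falg_star_scal[of L 1] by simp

lemma falg_star_letter: "falg_star L (letter l) = L l"
  by (simp add: letter_def falg_star_single)

lemma falg_star_involutive:
  assumes letter: "\<And>l. falg_star L (L l) = letter l"
  shows "falg_star L (falg_star L X) = X"
proof (induction X rule: poly_mapping_induct_single)
  case (single k a)
  have wmon: "falg_star L (prod_list (rev (map L w))) = wmon w" for w
    by (induction w) (simp_all add: wmon_Nil falg_star_one falg_star_mult letter wmon_Cons)
  have "falg_star L (falg_star L (Poly_Mapping.single k a)) = wmon (letters k) * scal a"
    by (simp add: falg_star_single falg_star_mult falg_star_scal wmon)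
  also have "\<dots> = Poly_Mapping.single k a"
    by (subst single_eq_scal_wmon[of k a]) (rule scal_mult_commute[symmetric])
  finally show ?case .
qed (simp_all add: falg_star_add)

lemma falg_star_preserves_gen_ideal:
  assumes "\<And>g. g \<in> G \<Longrightarrow> falg_star L g \<in> gen_ideal G"
  shows "cong_mod G X Y \<Longrightarrow> cong_mod G (falg_star L X) (falg_star L Y)"
  using anti_hom_preserves_gen_ideal[of "falg_star L" G "X - Y"] assms
  by (simp add: cong_mod_def falg_star_add falg_star_mult falg_star_diff)

definition poly_at :: "'a poly \<Rightarrow> ('k::monoid_add \<Rightarrow>\<^sub>0 'a::comm_ring_1) \<Rightarrow> 'k \<Rightarrow>\<^sub>0 'a" where
  "poly_at f z = fold_coeffs (\<lambda>c y. scal c + z * y) f 0"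

lemma poly_at_0 [simp]: "poly_at 0 z = 0"
  by (simp add: poly_at_def)

lemma poly_at_pCons: "poly_at (pCons c f) z = scal c + z * poly_at f z"
  by (cases "f = 0 \<and> c = 0") (auto simp: poly_at_def)

lemma poly_at_const: "poly_at [:c:] z = scal c"
  by (simp add: poly_at_pCons)

lemma poly_at_add: "poly_at (f + g) z = poly_at f z + poly_at g z"
proof (induction f arbitrary: g rule: pCons_induct)
  case (pCons a f)
  then show ?case
    by (cases g rule: pCons_cases) (simp add: poly_at_pCons single_add algebra_simps)
qed simp

lemma poly_at_smult: "poly_at (smult c f) z = scal c * poly_at f z"
  by (induction f rule: pCons_induct)
    (simp_all add: poly_at_pCons scal_mult scal_mult_left_commute distrib_left mult.assoc)

lemma poly_at_mult: "poly_at (f * g) z = poly_at f z * poly_at g z"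
  by (induction f rule: pCons_induct)
    (simp_all add: poly_at_pCons poly_at_add poly_at_smult algebra_simps)

lemma poly_at_commute: "poly_at f z * z = z * poly_at f z"
  by (induction f rule: pCons_induct)
    (simp_all add: poly_at_pCons algebra_simps scal_mult_commute[of _ z])

lemma poly_at_sum: "poly_at f z = (\<Sum>i\<le>degree f. scal (coeff f i) * z ^ i)"
proof (induction f rule: pCons_induct)
  case (pCons a f)
  show ?case
  proof (cases "f = 0")
    case False
    have "(\<Sum>i\<le>degree (pCons a f). scal (coeff (pCons a f) i) * z ^ i)
        = scal a + (\<Sum>i\<le>degree f. scal (coeff f i) * z ^ Suc i)"
      by (simp only: degree_pCons_eq[OF False] sum.atMost_Suc_shift) simp
    also have "\<dots> = scal a + z * poly_at f z"
      by (simp add: pCons.IH sum_distrib_left scal_mult_left_commute)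
    finally show ?thesis by (simp add: poly_at_pCons)
  qed (simp add: poly_at_const)
qed simp

lemma poly_at_central:
  "central_mod G z \<Longrightarrow> central_mod G (poly_at f z)"
  by (induction f rule: pCons_induct)
    (simp_all add: poly_at_pCons central_mod_add central_mod_mult central_mod_commute scal_mult_commute)

lemma falg_star_poly_at: "falg_star L (poly_at f z) = poly_at f (falg_star L z)"
  by (induction f rule: pCons_induct)
    (simp_all add: poly_at_pCons falg_star_add falg_star_mult
      falg_star_scal poly_at_commute)

lemma central_mod_falg_intro:
  fixes z :: "'a::comm_ring_1 falg"
  assumes letters: "\<And>l. cong_mod G (z * letter l) (letter l * z)"
  shows "central_mod G z"
proof -
  have wmon: "cong_mod G (z * wmon w) (wmon w * z)" for w
  proof (induction w)
    case Nil
    show ?case by (simp add: wmon_Nil)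
  next
    case (Cons l w)
    have "z * wmon (l # w) = (z * letter l) * wmon w" by (simp add: wmon_Cons mult.assoc)
    also have "cong_mod G \<dots> ((letter l * z) * wmon w)"
      by (intro cong_mod_mult letters cong_mod_refl)
    also have "\<dots> = letter l * (z * wmon w)" by (simp add: mult.assoc)
    also have "cong_mod G \<dots> (letter l * (wmon w * z))" by (intro cong_mod_mult Cons cong_mod_refl)
    also have "\<dots> = wmon (l # w) * z" by (simp add: wmon_Cons mult.assoc)
    finally show ?case .
  qed
  show ?thesis unfolding central_mod_def
  proof
    fix X
    show "cong_mod G (z * X) (X * z)"
    proof (induction X rule: poly_mapping_induct_single)
      case (single k a)
      have "z * Poly_Mapping.single k a = scal a * (z * wmon (letters k))"
        by (simp add: single_eq_scal_wmon[of k a] scal_mult_left_commute)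
      also have "cong_mod G \<dots> (scal a * (wmon (letters k) * z))"
        by (intro cong_mod_mult wmon cong_mod_refl)
      also have "\<dots> = Poly_Mapping.single k a * z"
        by (simp add: single_eq_scal_wmon[of k a] mult.assoc)
      finally show ?case .
    qed (simp_all add: distrib_left distrib_right cong_mod_add)
  qed
qed

text \<open>Scalars are moved to the front of products; the \<open>NO_MATCH\<close> guards keep the
  commutation rules from looping.\<close>

lemma scal_mult_right:
  "NO_MATCH (scal d) X \<Longrightarrow> X * scal c = scal c * (X :: 'k::monoid_add \<Rightarrow>\<^sub>0 'a::comm_ring_1)"
  by (rule scal_mult_commute[symmetric])

lemma scal_mult_right_left_commute:
  "NO_MATCH (scal d) X \<Longrightarrow> X * (scal c * Y) = scal c * (X * (Y :: 'k::monoid_add \<Rightarrow>\<^sub>0 'a::comm_ring_1))"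
  by (rule scal_mult_left_commute)

lemmas scal_normalize = scal_mult[symmetric] single_add single_diff single_uminus scal_mult_right
  scal_mult_right_left_commute scal_mult_left_commute[where X = "scal b" for b]
  scal_mult_commute[where X = "scal b" for b] algebra_simps

section \<open>Finitely supported coefficient functions\<close>

definition falg_of :: "'a::zero fa \<Rightarrow> 'a falg" where
  "falg_of f = Abs_poly_mapping (\<lambda>k. f (letters k))"

definition fa_of :: "'a::zero falg \<Rightarrow> 'a fa" where
  "fa_of X = (\<lambda>w. Poly_Mapping.lookup X (BWord w))"

lemma lookup_falg_of: "fin_supp f \<Longrightarrow> Poly_Mapping.lookup (falg_of f) = (\<lambda>k. f (letters k))"
proof -
  assume "fin_supp f"
  then have "finite (letters -` {w. f w \<noteq> 0})"
    using finite_vimageI[OF _ inj_letters] fin_supp_def by blast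
  then show ?thesis
    unfolding falg_of_def by (simp add: vimage_def Abs_poly_mapping_inverse)
qed

lemma fin_supp_fa_of: "fin_supp (fa_of X)"
proof -
  have "finite (BWord -` Poly_Mapping.keys X)"
    by (rule finite_vimageI) (auto simp: inj_def)
  then show ?thesis unfolding fin_supp_def fa_of_def by (simp add: vimage_def in_keys_iff)
qed

lemma falg_of_zero: "falg_of (\<lambda>w. 0) = 0"
  by (rule poly_mapping_eqI) (simp add: lookup_falg_of fin_supp_def)

lemma falg_of_fa_of: "falg_of (fa_of X) = X"
  by (rule poly_mapping_eqI) (simp add: lookup_falg_of fin_supp_fa_of, simp add: fa_of_def)

lemma fa_of_falg_of: "fin_supp f \<Longrightarrow> fa_of (falg_of f) = f"
  by (simp add: fa_of_def lookup_falg_of)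

lemma fin_supp_fadd: "fin_supp (f::'a::monoid_add fa) \<Longrightarrow> fin_supp g \<Longrightarrow> fin_supp (fadd f g)"
  unfolding fin_supp_def fadd_def by (rule finite_subset[of _ "{w. f w \<noteq> 0} \<union> {w. g w \<noteq> 0}"]) auto

lemma fin_supp_fsub: "fin_supp (f::'a::group_add fa) \<Longrightarrow> fin_supp g \<Longrightarrow> fin_supp (fsub f g)"
  unfolding fin_supp_def fsub_def by (rule finite_subset[of _ "{w. f w \<noteq> 0} \<union> {w. g w \<noteq> 0}"]) auto

lemma fin_supp_fscal: "fin_supp (fscal c)"
  unfolding fin_supp_def fscal_def by (rule finite_subset[of _ "{[]}"]) auto

lemma fin_supp_fone: "fin_supp fone"
  unfolding fin_supp_def fone_def by (rule finite_subset[of _ "{[]}"]) auto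

lemma fin_supp_fletter: "fin_supp (fletter l)"
  unfolding fin_supp_def fletter_def by (rule finite_subset[of _ "{[l]}"]) auto

lemma falg_of_fadd:
  assumes "fin_supp (f::'a::monoid_add fa)" "fin_supp g"
  shows "falg_of (fadd f g) = falg_of f + falg_of g"
  by (rule poly_mapping_eqI)
    (simp add: lookup_falg_of fin_supp_fadd assms lookup_add, simp add: fadd_def)

lemma falg_of_fsub:
  assumes "fin_supp (f::'a::ab_group_add fa)" "fin_supp g"
  shows "falg_of (fsub f g) = falg_of f - falg_of g"
  by (rule poly_mapping_eqI)
    (simp add: lookup_falg_of fin_supp_fsub assms lookup_minus, simp add: fsub_def)

lemma falg_of_fscal: "falg_of (fscal c) = scal c"
  by (rule poly_mapping_eqI, unfold lookup_falg_of[OF fin_supp_fscal])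
    (auto simp: lookup_single fscal_def when_def zero_bword_def bword.expand)

lemma falg_of_fone: "falg_of fone = (1::'a::comm_ring_1 falg)"
  by (rule poly_mapping_eqI, unfold lookup_falg_of[OF fin_supp_fone])
    (auto simp: lookup_one fone_def when_def zero_bword_def bword.expand)

lemma falg_of_fletter: "falg_of (fletter l) = letter l"
  by (rule poly_mapping_eqI, unfold lookup_falg_of[OF fin_supp_fletter])
    (auto simp: letter_def lookup_single fletter_def when_def bword.expand)

lemma lookup_falg_of_mult:
  fixes f g :: "'a::comm_semiring_0 fa"
  assumes "fin_supp f" "fin_supp g"
  shows "Poly_Mapping.lookup (falg_of f * falg_of g) (BWord w)
    = (\<Sum>i\<le>length w. f (take i w) * g (drop i w))"
proof -
  define h where
    "h u = f (letters u) * (g (drop (length (letters u)) w) when take (length (letters u)) w = letters u)"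
    for u
  have split: "Sum_any (\<lambda>v. g (letters v) when BWord w = u + v)
      = (g (drop (length (letters u)) w) when take (length (letters u)) w = letters u)" for u
  proof -
    have "(\<lambda>v. g (letters v) when BWord w = u + v)
        = (\<lambda>v. (g (drop (length (letters u)) w) when take (length (letters u)) w = letters u)
                when v = BWord (drop (length (letters u)) w))"
      by (rule ext) (auto simp: when_def plus_bword_def append_eq_conv_conj[symmetric] bword.expand,
          metis append_take_drop_id)
    then show ?thesis by (simp only: Sum_any_when_equal)
  qed
  have "Poly_Mapping.lookup (falg_of f * falg_of g) (BWord w) = Sum_any h"
    unfolding lookup_mult lookup_falg_of[OF assms(1)] lookup_falg_of[OF assms(2)] split h_def ..
  also have "\<dots> = sum h ((\<lambda>i. BWord (take i w)) ` {..length w})"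
  proof (rule Sum_any.expand_superset)
    show "{u. h u \<noteq> 0} \<subseteq> (\<lambda>i. BWord (take i w)) ` {..length w}"
    proof
      fix u assume "u \<in> {u. h u \<noteq> 0}"
      then have "take (length (letters u)) w = letters u"
        by (auto simp: h_def when_def split: if_splits)
      then show "u \<in> (\<lambda>i. BWord (take i w)) ` {..length w}"
        by (auto intro!: image_eqI[of _ _ "length (letters u)"] simp: bword.expand)
          (metis length_take min.absorb_iff2)
    qed
  qed simp
  also have "\<dots> = (\<Sum>i\<le>length w. h (BWord (take i w)))"
    by (rule sum.reindex[unfolded comp_def])
      (rule inj_onI, metis atMost_iff length_take min.absorb2 bword.inject)
  also have "\<dots> = (\<Sum>i\<le>length w. f (take i w) * g (drop i w))"
    by (rule sum.cong) (auto simp: h_def min_def)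
  finally show ?thesis .
qed

lemma fmul_eq_fa_of_mult:
  fixes f g :: "'a::comm_semiring_0 fa"
  assumes "fin_supp f" "fin_supp g"
  shows "fmul f g = fa_of (falg_of f * falg_of g)"
  by (rule ext) (simp add: fmul_def fa_of_def lookup_falg_of_mult[OF assms])

lemma fin_supp_fmul: "fin_supp (f::'a::comm_semiring_0 fa) \<Longrightarrow> fin_supp g \<Longrightarrow> fin_supp (fmul f g)"
  by (simp add: fmul_eq_fa_of_mult fin_supp_fa_of)

lemma falg_of_fmul:
  "fin_supp (f::'a::comm_semiring_0 fa) \<Longrightarrow> fin_supp g \<Longrightarrow> falg_of (fmul f g) = falg_of f * falg_of g"
  by (simp add: fmul_eq_fa_of_mult falg_of_fa_of)

lemma fin_supp_fpow: "fin_supp (f::'a::comm_ring_1 fa) \<Longrightarrow> fin_supp (fpow f n)"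
  by (induction n) (simp_all add: fin_supp_fone fin_supp_fmul)

lemma falg_of_fpow: "fin_supp (f::'a::comm_ring_1 fa) \<Longrightarrow> falg_of (fpow f n) = falg_of f ^ n"
  by (induction n) (simp_all add: falg_of_fone falg_of_fmul fin_supp_fpow)

lemma falg_of_lincomb:
  fixes h :: "'i \<Rightarrow> 'a::comm_ring_1 fa"
  assumes "finite S" "\<And>i. i \<in> S \<Longrightarrow> fin_supp (h i)"
  shows "fin_supp (\<lambda>w. \<Sum>i\<in>S. c i * h i w)
    \<and> falg_of (\<lambda>w. \<Sum>i\<in>S. c i * h i w) = (\<Sum>i\<in>S. scal (c i) * falg_of (h i))"
  using assms
proof (induction S rule: finite_induct)
  case empty
  show ?case by (simp add: fin_supp_def falg_of_zero)
next
  case (insert i S)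
  have hi: "fin_supp (h i)" using insert by simp
  have ci: "fin_supp (\<lambda>w. c i * h i w)"
    using hi unfolding fin_supp_def by (rule finite_subset[rotated]) auto
  have ci_alg: "falg_of (\<lambda>w. c i * h i w) = scal (c i) * falg_of (h i)"
    by (intro poly_mapping_eqI) (simp add: lookup_scal_mult lookup_falg_of ci hi)
  have "(\<lambda>w. \<Sum>i\<in>insert i S. c i * h i w) = fadd (\<lambda>w. c i * h i w) (\<lambda>w. \<Sum>i\<in>S. c i * h i w)"
    using insert by (simp add: fadd_def)
  with insert ci ci_alg show ?case by (simp add: fin_supp_fadd falg_of_fadd)
qed

lemma fin_supp_fpeval: "fin_supp (fpeval (p::'a::comm_ring_1 poly) l)"
  using falg_of_lincomb[of "{..degree p}" "\<lambda>i. fpow (fletter l) i" "coeff p"]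
  by (simp add: fpeval_def fin_supp_fpow fin_supp_fletter)

lemma falg_of_fpeval: "falg_of (fpeval (p::'a::comm_ring_1 poly) l) = poly_at p (letter l)"
  using falg_of_lincomb[of "{..degree p}" "\<lambda>i. fpow (fletter l) i" "coeff p"]
  by (simp add: fpeval_def fin_supp_fpow fin_supp_fletter falg_of_fpow falg_of_fletter poly_at_sum)

abbreviation relators :: "'a::comm_ring_1 poly \<Rightarrow> 'a poly \<Rightarrow> 'a falg set" where
  "relators p q \<equiv> {poly_at p (letter False), poly_at q (letter True)}"

lemma wideal_imp_gen_ideal:
  "f \<in> wideal p q \<Longrightarrow> fin_supp f \<and> falg_of f \<in> gen_ideal (relators p q)"
proof (induction rule: wideal.induct)
  case zero
  show ?case by (simp add: fin_supp_def falg_of_zero gen_ideal.zero)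
qed (simp_all add: fin_supp_fpeval falg_of_fpeval gen_ideal.generator fin_supp_fadd falg_of_fadd
    gen_ideal.add fin_supp_fmul falg_of_fmul gen_ideal.mult_left gen_ideal.mult_right)

lemma gen_ideal_imp_wideal: "X \<in> gen_ideal (relators p q) \<Longrightarrow> fa_of X \<in> wideal p q"
proof (induction rule: gen_ideal.induct)
  case (generator g)
  then show ?case
    by (auto simp flip: falg_of_fpeval simp: fa_of_falg_of fin_supp_fpeval wideal.gen_a wideal.gen_b)
next
  case zero
  show ?case by (simp add: fa_of_def wideal.zero)
next
  case (add X Y)
  then show ?case by (simp add: fa_of_def lookup_add wideal.add[of _ p q, unfolded fadd_def])
next
  case (mult_left X r)
  have "fa_of (r * X) = fmul (fa_of r) (fa_of X)"
    by (simp add: fmul_eq_fa_of_mult fin_supp_fa_of falg_of_fa_of)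
  with mult_left show ?case by (simp add: wideal.mult_left fin_supp_fa_of)
next
  case (mult_right X r)
  have "fa_of (X * r) = fmul (fa_of X) (fa_of r)"
    by (simp add: fmul_eq_fa_of_mult fin_supp_fa_of falg_of_fa_of)
  with mult_right show ?case by (simp add: wideal.mult_right fin_supp_fa_of)
qed

lemma wideal_iff_gen_ideal:
  "fin_supp f \<Longrightarrow> f \<in> wideal p q \<longleftrightarrow> falg_of f \<in> gen_ideal (relators p q)"
  using wideal_imp_gen_ideal gen_ideal_imp_wideal fa_of_falg_of by metis

definition letter_star :: "'a::comm_ring_1 poly \<Rightarrow> 'a poly \<Rightarrow> bool \<Rightarrow> 'a falg" where
  "letter_star p q l = scal (- coeff (if l then q else p) 1) - letter l"

lemma fin_supp_lstar: "fin_supp (lstar p q l)"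
  by (simp add: lstar_def fin_supp_fsub fin_supp_fscal fin_supp_fletter)

lemma fin_supp_wstar: "fin_supp (wstar p q w)"
  by (induction w) (simp_all add: fin_supp_fone fin_supp_fmul fin_supp_lstar)

lemma falg_of_lstar: "falg_of (lstar p q l) = letter_star p q l"
  by (simp add: lstar_def letter_star_def falg_of_fsub fin_supp_fscal fin_supp_fletter falg_of_fscal
      falg_of_fletter)

lemma falg_of_wstar: "falg_of (wstar p q w) = prod_list (rev (map (letter_star p q) w))"
  by (induction w) (simp_all add: falg_of_fone falg_of_fmul fin_supp_wstar fin_supp_lstar falg_of_lstar)

lemma falg_of_fstar:
  assumes "fin_supp x"
  shows "fin_supp (fstar p q x) \<and> falg_of (fstar p q x) = falg_star (letter_star p q) (falg_of x)"
proof -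
  have supp: "finite {w. x w \<noteq> 0}" using assms fin_supp_def by blast
  have keys: "Poly_Mapping.keys (falg_of x) = BWord ` {w. x w \<noteq> 0}"
    by (auto simp: in_keys_iff lookup_falg_of assms image_iff) (metis bword.collapse)
  have "falg_star (letter_star p q) (falg_of x)
      = (\<Sum>w\<in>{w. x w \<noteq> 0}. scal (x w) * prod_list (rev (map (letter_star p q) w)))"
    unfolding falg_star_def lin_ext_def keys
    by (subst sum.reindex) (auto simp: inj_on_def lookup_falg_of assms)
  then show ?thesis
    unfolding fstar_def using falg_of_lincomb[OF supp, of "wstar p q" x]
    by (simp add: fin_supp_wstar falg_of_wstar)
qed

lemma fsub_in_wideal_iff:
  assumes "fin_supp f" "fin_supp g"
  shows "fsub f g \<in> wideal p q \<longleftrightarrow> cong_mod (relators p q) (falg_of f) (falg_of g)"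
  using assms by (simp add: wideal_iff_gen_ideal fin_supp_fsub falg_of_fsub cong_mod_def)

lemma w_invertible_iff:
  assumes "fin_supp x"
  shows "w_invertible p q x \<longleftrightarrow>
    (\<exists>Y. cong_mod (relators p q) (falg_of x * Y) 1 \<and> cong_mod (relators p q) (Y * falg_of x) 1)"
proof
  assume "w_invertible p q x"
  then obtain y where
    "fin_supp y" "fsub (fmul x y) fone \<in> wideal p q" "fsub (fmul y x) fone \<in> wideal p q"
    by (auto simp: w_invertible_def)
  with assms show
    "\<exists>Y. cong_mod (relators p q) (falg_of x * Y) 1 \<and> cong_mod (relators p q) (Y * falg_of x) 1"
    by (auto simp: fsub_in_wideal_iff fin_supp_fmul fin_supp_fone falg_of_fmul falg_of_fone)
next
  assume "\<exists>Y. cong_mod (relators p q) (falg_of x * Y) 1 \<and> cong_mod (relators p q) (Y * falg_of x) 1"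
  then obtain Y where
    "cong_mod (relators p q) (falg_of x * Y) 1" "cong_mod (relators p q) (Y * falg_of x) 1"
    by blast
  with assms show "w_invertible p q x"
    unfolding w_invertible_def
    by (intro exI[of _ "fa_of Y"])
      (simp add: fin_supp_fa_of fsub_in_wideal_iff fin_supp_fmul fin_supp_fone falg_of_fmul falg_of_fone
        falg_of_fa_of)
qed

lemma wnorm_in_wideal_iff:
  assumes "fin_supp x"
  shows "fsub (wnorm p q x) (fscal c) \<in> wideal p q \<longleftrightarrow>
    cong_mod (relators p q) (falg_of x * falg_star (letter_star p q) (falg_of x)) (scal c)"
  using assms falg_of_fstar[OF assms]
  by (simp add: wnorm_def fsub_in_wideal_iff fin_supp_fmul fin_supp_fscal falg_of_fmul falg_of_fscal)

section \<open>\<open>2 \<times> 2\<close> matrices\<close>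

datatype 'a m2 = M2 (e11: 'a) (e12: 'a) (e21: 'a) (e22: 'a)

lemma m2_eq_iff: "x = y \<longleftrightarrow> e11 x = e11 y \<and> e12 x = e12 y \<and> e21 x = e21 y \<and> e22 x = e22 y"
  by (cases x; cases y) auto

instantiation m2 :: (comm_ring_1) ring_1
begin
definition "0 = M2 0 0 0 0"
definition "1 = M2 1 0 0 1"
definition "x + y = M2 (e11 x + e11 y) (e12 x + e12 y) (e21 x + e21 y) (e22 x + e22 y)"
definition "x - y = M2 (e11 x - e11 y) (e12 x - e12 y) (e21 x - e21 y) (e22 x - e22 y)"
definition "- x = M2 (- e11 x) (- e12 x) (- e21 x) (- e22 x)"
definition "x * y = M2 (e11 x * e11 y + e12 x * e21 y) (e11 x * e12 y + e12 x * e22 y)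
   (e21 x * e11 y + e22 x * e21 y) (e21 x * e12 y + e22 x * e22 y)"
instance
  by standard (simp_all add: m2_eq_iff zero_m2_def one_m2_def plus_m2_def minus_m2_def
      uminus_m2_def times_m2_def algebra_simps)
end

lemma m2_entries [simp]:
  "e11 (0::'a::comm_ring_1 m2) = 0" "e12 (0::'a m2) = 0" "e21 (0::'a m2) = 0" "e22 (0::'a m2) = 0"
  "e11 (1::'a::comm_ring_1 m2) = 1" "e12 (1::'a m2) = 0" "e21 (1::'a m2) = 0" "e22 (1::'a m2) = 1"
  "e11 (x + y) = e11 x + e11 y" "e12 (x + y) = e12 x + e12 y"
  "e21 (x + y) = e21 x + e21 y" "e22 (x + y) = e22 x + e22 y"
  "e11 (x - y) = e11 x - e11 y" "e12 (x - y) = e12 x - e12 y"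
  "e21 (x - y) = e21 x - e21 y" "e22 (x - y) = e22 x - e22 y"
  "e11 (- x) = - e11 x" "e12 (- x) = - e12 x" "e21 (- x) = - e21 x" "e22 (- x) = - e22 x"
  "e11 (x * y) = e11 x * e11 y + e12 x * e21 y" "e12 (x * y) = e11 x * e12 y + e12 x * e22 y"
  "e21 (x * y) = e21 x * e11 y + e22 x * e21 y" "e22 (x * y) = e21 x * e12 y + e22 x * e22 y"
  by (simp_all add: zero_m2_def one_m2_def plus_m2_def minus_m2_def uminus_m2_def times_m2_def)

definition m2_scalar :: "'a::comm_ring_1 \<Rightarrow> 'a m2" where
  "m2_scalar c = M2 c 0 0 c"

lemma m2_scalar_inject: "m2_scalar a = m2_scalar b \<longleftrightarrow> a = b"
  by (simp add: m2_scalar_def)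

lemma m2_scalar_1: "m2_scalar 1 = 1"
  by (simp add: m2_scalar_def m2_eq_iff)

lemma m2_scalar_0: "m2_scalar 0 = 0"
  by (simp add: m2_scalar_def m2_eq_iff)

lemma m2_scalar_add: "m2_scalar (a + b) = m2_scalar a + m2_scalar b"
  by (simp add: m2_scalar_def m2_eq_iff)

lemma m2_scalar_mult: "m2_scalar (a * b) = m2_scalar a * m2_scalar b"
  by (simp add: m2_scalar_def m2_eq_iff)

lemma m2_scalar_commute: "m2_scalar a * x = x * m2_scalar a"
  by (simp add: m2_scalar_def m2_eq_iff mult.commute)

lemma central_hom_m2_const: "central_hom (\<lambda>c. m2_scalar [:c:])"
  by unfold_locales
    (auto simp: m2_scalar_add[symmetric] m2_scalar_mult[symmetric] one_pCons[symmetric] m2_scalar_1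
      mult.commute intro: m2_scalar_commute)

interpretation m2_const: central_hom "\<lambda>c. m2_scalar [:c:]"
  by (rule central_hom_m2_const)

lemma m2_const_eval_poly_at:
  assumes "m2_const.eval L z = m2_scalar r"
  shows "m2_const.eval L (poly_at f z) = m2_scalar (f \<circ>\<^sub>p r)"
  by (induction f rule: pCons_induct)
    (simp_all add: poly_at_pCons m2_const.eval_add m2_const.eval_mult m2_const.eval_scal assms
      pcompose_pCons m2_scalar_add m2_scalar_mult m2_const.eval_zero m2_scalar_0)

section \<open>The algebra \<open>W\<^sub>p\<^sub>,\<^sub>q\<close>\<close>

lemma monic_quadratic_eq:
  assumes "degree p = 2" "lead_coeff p = 1"
  shows "p = [:coeff p 0, coeff p 1, 1:]"
proof (rule poly_eqI)
  fix n
  show "coeff p n = coeff [:coeff p 0, coeff p 1, 1:] n"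
    using assms coeff_eq_0[of p n]
      by (cases n; cases "n - 1"; cases "n - 2") (auto simp: coeff_pCons numeral_2_eq_2)
qed

locale W_pq =
  fixes p q :: "'a::comm_ring_1 poly"
  assumes degree_p: "degree p = 2" and monic_p: "lead_coeff p = 1"
    and degree_q: "degree q = 2" and monic_q: "lead_coeff q = 1"
begin

abbreviation A :: "'a falg" where "A \<equiv> letter False"
abbreviation B :: "'a falg" where "B \<equiv> letter True"
abbreviation P :: "'a falg" where "P \<equiv> poly_at p A"
abbreviation Q :: "'a falg" where "Q \<equiv> poly_at q B"
abbreviation star :: "'a falg \<Rightarrow> 'a falg" where "star \<equiv> falg_star (letter_star p q)"

abbreviation cong :: "'a falg \<Rightarrow> 'a falg \<Rightarrow> bool" (infix "\<simeq>" 50) where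
  "X \<simeq> Y \<equiv> cong_mod (relators p q) X Y"

abbreviation central :: "'a falg \<Rightarrow> bool" where
  "central \<equiv> central_mod (relators p q)"

definition omega :: "'a falg" where
  "omega = A * star B + B * star A"

lemma P_eq: "P = scal (coeff p 0) + scal (coeff p 1) * A + A * A"
  by (subst monic_quadratic_eq[OF degree_p monic_p]) (simp add: poly_at_pCons scal_normalize)

lemma Q_eq: "Q = scal (coeff q 0) + scal (coeff q 1) * B + B * B"
  by (subst monic_quadratic_eq[OF degree_q monic_q]) (simp add: poly_at_pCons scal_normalize)

lemma star_A: "star A = - scal (coeff p 1) - A"
  by (simp add: falg_star_letter letter_star_def single_uminus)

lemma star_B: "star B = - scal (coeff q 1) - B"
  by (simp add: falg_star_letter letter_star_def single_uminus)

lemma star_P: "star P = P"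
  by (simp add: P_eq falg_star_add falg_star_mult falg_star_scal star_A scal_normalize)

lemma star_Q: "star Q = Q"
  by (simp add: Q_eq falg_star_add falg_star_mult falg_star_scal star_B scal_normalize)

lemma star_star: "star (star X) = X"
  by (rule falg_star_involutive)
    (simp add: letter_star_def falg_star_diff falg_star_scal falg_star_letter)

lemma cong_star: "X \<simeq> Y \<Longrightarrow> star X \<simeq> star Y"
  by (rule falg_star_preserves_gen_ideal) (auto simp: star_P star_Q gen_ideal.generator)

lemma cong_relators: "P \<simeq> 0" "Q \<simeq> 0"
  by (simp_all add: cong_mod_generator)

lemma A_sq: "A * A \<simeq> - scal (coeff p 1) * A - scal (coeff p 0)"
proof -
  have "A * A = P + (- scal (coeff p 1) * A - scal (coeff p 0))" by (simp add: P_eq scal_normalize)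
  also have "\<dots> \<simeq> 0 + (- scal (coeff p 1) * A - scal (coeff p 0))"
    by (intro cong_mod_add cong_relators cong_mod_refl)
  finally show ?thesis by simp
qed

lemma B_sq: "B * B \<simeq> - scal (coeff q 1) * B - scal (coeff q 0)"
proof -
  have "B * B = Q + (- scal (coeff q 1) * B - scal (coeff q 0))" by (simp add: Q_eq scal_normalize)
  also have "\<dots> \<simeq> 0 + (- scal (coeff q 1) * B - scal (coeff q 0))"
    by (intro cong_mod_add cong_relators cong_mod_refl)
  finally show ?thesis by simp
qed

lemma omega_eq: "omega = - scal (coeff q 1) * A - A * B - scal (coeff p 1) * B - B * A"
  by (simp add: omega_def star_A star_B scal_normalize)

lemma star_omega: "star omega = omega"
  by (simp add: omega_def falg_star_add falg_star_mult star_star add.commute)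

lemma central_omega: "central omega"
proof (rule central_mod_falg_intro)
  fix l
  have "omega * A - A * omega = P * B - B * P" "omega * B - B * omega = Q * A - A * Q"
    by (simp_all add: omega_eq P_eq Q_eq scal_normalize)
  then show "omega * letter l \<simeq> letter l * omega"
    by (cases l) (simp_all add: cong_mod_def gen_ideal_diff gen_ideal.mult_left gen_ideal.mult_right
        gen_ideal.generator)
qed


definition in_Fomega :: "'a falg \<Rightarrow> bool" where
  "in_Fomega X \<longleftrightarrow> (\<exists>f. X \<simeq> poly_at f omega)"

lemma in_Fomega_scal: "in_Fomega (scal c)"
  unfolding in_Fomega_def by (metis poly_at_const cong_mod_refl)

lemma in_Fomega_omega: "in_Fomega omega"
proof -
  have "poly_at [:0, 1:] omega = omega" by (simp add: poly_at_pCons)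
  then show ?thesis unfolding in_Fomega_def by (metis cong_mod_refl)
qed

lemma in_Fomega_add: "in_Fomega X \<Longrightarrow> in_Fomega Y \<Longrightarrow> in_Fomega (X + Y)"
  unfolding in_Fomega_def by (metis cong_mod_add poly_at_add)

lemma in_Fomega_mult: "in_Fomega X \<Longrightarrow> in_Fomega Y \<Longrightarrow> in_Fomega (X * Y)"
  unfolding in_Fomega_def by (metis cong_mod_mult poly_at_mult)

lemma in_Fomega_uminus: "in_Fomega X \<Longrightarrow> in_Fomega (- X)"
  using in_Fomega_mult[OF in_Fomega_scal[of "- 1"]] by (simp add: single_uminus)

lemma in_Fomega_diff: "in_Fomega X \<Longrightarrow> in_Fomega Y \<Longrightarrow> in_Fomega (X - Y)"
  by (metis diff_conv_add_uminus in_Fomega_add in_Fomega_uminus)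

lemmas in_Fomega_intros = in_Fomega_scal in_Fomega_omega in_Fomega_add in_Fomega_mult
  in_Fomega_uminus in_Fomega_diff

lemma in_Fomega_one: "in_Fomega 1" and in_Fomega_zero: "in_Fomega 0"
  using in_Fomega_scal[of 1] in_Fomega_scal[of 0] by simp_all

lemma in_Fomega_cong: "X \<simeq> Y \<Longrightarrow> in_Fomega Y \<Longrightarrow> in_Fomega X"
  unfolding in_Fomega_def using cong_mod_trans by blast

lemma in_Fomega_central: "in_Fomega X \<Longrightarrow> central X"
  unfolding in_Fomega_def by (metis central_mod_cong cong_mod_sym poly_at_central central_omega)

lemma in_Fomega_star: "in_Fomega X \<Longrightarrow> star X \<simeq> X"
proof -
  assume "in_Fomega X"
  then obtain f where f: "X \<simeq> poly_at f omega" by (auto simp: in_Fomega_def)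
  have "star X \<simeq> star (poly_at f omega)" by (rule cong_star[OF f])
  also have "\<dots> = poly_at f omega" by (simp add: falg_star_poly_at star_omega)
  also have "\<dots> \<simeq> X" by (rule cong_mod_sym[OF f])
  finally show ?thesis .
qed

definition in_Fomega_span :: "'a falg \<Rightarrow> bool" where
  "in_Fomega_span X \<longleftrightarrow> (\<exists>a b c d. in_Fomega a \<and> in_Fomega b \<and> in_Fomega c \<and> in_Fomega d
      \<and> X \<simeq> a + b * A + c * B + d * (A * B))"

lemma in_Fomega_spanI:
  "X \<simeq> a + b * A + c * B + d * (A * B) \<Longrightarrow> in_Fomega a \<Longrightarrow> in_Fomega b \<Longrightarrow> in_Fomega c
    \<Longrightarrow> in_Fomega d \<Longrightarrow> in_Fomega_span X"
  unfolding in_Fomega_span_def by blast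

lemma in_Fomega_span_cong: "X \<simeq> Y \<Longrightarrow> in_Fomega_span Y \<Longrightarrow> in_Fomega_span X"
  unfolding in_Fomega_span_def using cong_mod_trans by blast

lemma in_Fomega_span_A_mult:
  assumes "in_Fomega a" "in_Fomega b" "in_Fomega c" "in_Fomega d"
  shows "in_Fomega_span (A * (a + b * A + c * B + d * (A * B)))"
proof (rule in_Fomega_spanI)
  have central: "central a" "central b" "central c" "central d"
    using assms in_Fomega_central by auto
  have "A * (a + b * A + c * B + d * (A * B)) = A * a + (A * b) * A + (A * c) * B + ((A * d) * A) * B"
    by (simp add: algebra_simps)
  also have "\<dots> \<simeq> a * A + (b * A) * A + (c * A) * B + ((d * A) * A) * B"
    using central by (intro cong_mod_add cong_mod_mult cong_mod_refl central_modD')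
  also have "\<dots> = a * A + b * (A * A) + c * A * B + d * (A * A) * B"
    by (simp add: mult.assoc)
  also have "\<dots> \<simeq> a * A + b * (- scal (coeff p 1) * A - scal (coeff p 0)) + c * A * B
      + d * (- scal (coeff p 1) * A - scal (coeff p 0)) * B"
    by (intro cong_mod_add cong_mod_mult cong_mod_refl A_sq)
  also have "\<dots> = - scal (coeff p 0) * b + (a - scal (coeff p 1) * b) * A + (- scal (coeff p 0) * d) * B
      + (c - scal (coeff p 1) * d) * (A * B)"
    by (simp add: scal_normalize)
  finally show "A * (a + b * A + c * B + d * (A * B)) \<simeq> \<dots>" .
qed (intro in_Fomega_intros assms)+

lemma in_Fomega_span_B_mult:
  assumes "in_Fomega a" "in_Fomega b" "in_Fomega c" "in_Fomega d"
  shows "in_Fomega_span (B * (a + b * A + c * B + d * (A * B)))"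
proof (rule in_Fomega_spanI)
  let ?p0 = "scal (coeff p 0)" and ?p1 = "scal (coeff p 1)"
  let ?q0 = "scal (coeff q 0)" and ?q1 = "scal (coeff q 1)"
  have central: "central a" "central b" "central c" "central d"
    using assms in_Fomega_central by auto
  have BA: "B * A = - omega - ?q1 * A - ?p1 * B - A * B"
    by (simp add: omega_eq scal_normalize)
  have "B * (a + b * A + c * B + d * (A * B)) = B * a + (B * b) * A + (B * c) * B + ((B * d) * A) * B"
    by (simp add: algebra_simps)
  also have "\<dots> \<simeq> a * B + (b * B) * A + (c * B) * B + ((d * B) * A) * B"
    using central by (intro cong_mod_add cong_mod_mult cong_mod_refl central_modD')
  also have "\<dots> = a * B + b * (B * A) + c * (B * B) + d * (B * A) * B"
    by (simp add: mult.assoc)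
  also have "\<dots> = a * B + b * (- omega - ?q1 * A - ?p1 * B - A * B) + c * (B * B)
      + d * (- omega * B - ?q1 * (A * B) - ?p1 * (B * B) - A * (B * B))"
    by (simp add: BA scal_normalize)
  also have "\<dots> \<simeq> a * B + b * (- omega - ?q1 * A - ?p1 * B - A * B) + c * (- ?q1 * B - ?q0)
      + d * (- omega * B - ?q1 * (A * B) - ?p1 * (- ?q1 * B - ?q0) - A * (- ?q1 * B - ?q0))"
    by (intro cong_mod_add cong_mod_diff cong_mod_mult cong_mod_refl B_sq)
  also have "\<dots> = (- b * omega - ?q0 * c + ?p1 * ?q0 * d) + (- ?q1 * b + ?q0 * d) * A
      + (a - ?p1 * b - ?q1 * c - d * omega + ?p1 * ?q1 * d) * B + (- b) * (A * B)"
    by (simp add: scal_normalize)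
  finally show "B * (a + b * A + c * B + d * (A * B)) \<simeq> \<dots>" .
qed (intro in_Fomega_intros assms)+

lemma in_Fomega_span_letter_mult:
  assumes "in_Fomega_span X"
  shows "in_Fomega_span (letter l * X)"
proof -
  obtain a b c d where in_Fomega: "in_Fomega a" "in_Fomega b" "in_Fomega c" "in_Fomega d"
    and X: "X \<simeq> a + b * A + c * B + d * (A * B)"
    using assms in_Fomega_span_def by blast
  have "letter l * X \<simeq> letter l * (a + b * A + c * B + d * (A * B))"
    by (intro cong_mod_mult cong_mod_refl X)
  moreover have "in_Fomega_span (letter l * (a + b * A + c * B + d * (A * B)))"
    using in_Fomega_span_A_mult[OF in_Fomega] in_Fomega_span_B_mult[OF in_Fomega] by (cases l) auto
  ultimately show ?thesis by (rule in_Fomega_span_cong)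
qed

lemma in_Fomega_span_wmon: "in_Fomega_span (wmon w)"
proof (induction w)
  case Nil
  show ?case
    by (rule in_Fomega_spanI[where a = 1 and b = 0 and c = 0 and d = 0])
      (auto simp: wmon_Nil intro: in_Fomega_one in_Fomega_zero)
next
  case (Cons l w)
  then show ?case by (simp add: wmon_Cons in_Fomega_span_letter_mult)
qed

lemma in_Fomega_span_scal_mult:
  assumes "in_Fomega_span X"
  shows "in_Fomega_span (scal e * X)"
proof -
  obtain a b c d where in_Fomega: "in_Fomega a" "in_Fomega b" "in_Fomega c" "in_Fomega d"
    and X: "X \<simeq> a + b * A + c * B + d * (A * B)"
    using assms in_Fomega_span_def by blast
  have "scal e * X \<simeq> scal e * (a + b * A + c * B + d * (A * B))"
    by (intro cong_mod_mult cong_mod_refl X)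
  also have "\<dots> = scal e * a + (scal e * b) * A + (scal e * c) * B + (scal e * d) * (A * B)"
    by (simp add: algebra_simps)
  finally show ?thesis by (rule in_Fomega_spanI) (intro in_Fomega_intros in_Fomega)+
qed

lemma in_Fomega_span_add:
  assumes "in_Fomega_span X" "in_Fomega_span Y"
  shows "in_Fomega_span (X + Y)"
proof -
  obtain a b c d where in_Fomega: "in_Fomega a" "in_Fomega b" "in_Fomega c" "in_Fomega d"
    and X: "X \<simeq> a + b * A + c * B + d * (A * B)"
    using assms in_Fomega_span_def by blast
  obtain a' b' c' d' where in_Fomega': "in_Fomega a'" "in_Fomega b'" "in_Fomega c'" "in_Fomega d'"
    and Y: "Y \<simeq> a' + b' * A + c' * B + d' * (A * B)"
    using assms in_Fomega_span_def by blast
  have "X + Y \<simeq> (a + b * A + c * B + d * (A * B)) + (a' + b' * A + c' * B + d' * (A * B))"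
    by (intro cong_mod_add X Y)
  also have "\<dots> = (a + a') + (b + b') * A + (c + c') * B + (d + d') * (A * B)"
    by (simp add: algebra_simps)
  finally show ?thesis by (rule in_Fomega_spanI) (intro in_Fomega_intros in_Fomega in_Fomega')+
qed

lemma in_Fomega_span_all: "in_Fomega_span X"
proof (induction X rule: poly_mapping_induct_single)
  case zero
  show ?case
    by (rule in_Fomega_spanI[where a = 0 and b = 0 and c = 0 and d = 0]) (auto intro: in_Fomega_zero)
next
  case (single k e)
  show ?case
    unfolding single_eq_scal_wmon[of k e] by (intro in_Fomega_span_scal_mult in_Fomega_span_wmon)
qed (rule in_Fomega_span_add)


definition trace :: "'a falg \<Rightarrow> 'a falg" where
  "trace X = X + star X"

lemma trace_cong: "X \<simeq> Y \<Longrightarrow> trace X \<simeq> trace Y"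
  unfolding trace_def by (intro cong_mod_add cong_star)

lemma trace_add: "trace (X + Y) = trace X + trace Y"
  by (simp add: trace_def falg_star_add algebra_simps)

lemma in_Fomega_trace_mult:
  assumes b: "in_Fomega b" and Z: "in_Fomega (trace Z)"
  shows "in_Fomega (trace (b * Z))"
proof -
  have "trace (b * Z) = b * Z + star Z * star b" by (simp add: trace_def falg_star_mult)
  also have "\<dots> \<simeq> b * Z + star Z * b"
    by (intro cong_mod_add cong_mod_mult cong_mod_refl in_Fomega_star b)
  also have "\<dots> \<simeq> b * Z + b * star Z"
    using in_Fomega_central[OF b] by (intro cong_mod_add cong_mod_refl central_modD')
  also have "\<dots> = b * trace Z" by (simp add: trace_def algebra_simps)
  finally show ?thesis by (rule in_Fomega_cong) (intro in_Fomega_mult b Z)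
qed

lemma in_Fomega_trace: "in_Fomega (trace X)"
proof -
  obtain a b c d where in_Fomega: "in_Fomega a" "in_Fomega b" "in_Fomega c" "in_Fomega d"
    and X: "X \<simeq> a + b * A + c * B + d * (A * B)"
    using in_Fomega_span_all in_Fomega_span_def by blast
  have "trace 1 = scal 2" "trace A = - scal (coeff p 1)" "trace B = - scal (coeff q 1)"
    "trace (A * B) = scal (coeff p 1 * coeff q 1) - omega"
    by (simp_all add: trace_def falg_star_one falg_star_mult star_A star_B omega_eq scal_normalize)
  then have basis: "in_Fomega (trace 1)" "in_Fomega (trace A)" "in_Fomega (trace B)"
    "in_Fomega (trace (A * B))"
    using in_Fomega_scal[of 2] by (simp_all add: in_Fomega_intros)
  have "trace X \<simeq> trace (a * 1) + trace (b * A) + trace (c * B) + trace (d * (A * B))"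
    using trace_cong[OF X] by (simp add: trace_add)
  moreover have "in_Fomega (trace (a * 1) + trace (b * A) + trace (c * B) + trace (d * (A * B)))"
    using in_Fomega by (intro in_Fomega_add in_Fomega_trace_mult basis)
  ultimately show ?thesis by (rule in_Fomega_cong)
qed

lemma trace_swap: "trace (U * V) \<simeq> trace (V * U)"
proof -
  have central: "central (trace X)" for X by (rule in_Fomega_central[OF in_Fomega_trace])
  have "trace (U * V) - trace (V * U)
      = (trace V * trace U - trace U * trace V) + (U * trace V - trace V * U)
        + (trace U * V - V * trace U)"
    by (simp add: trace_def falg_star_mult algebra_simps)
  moreover have "trace V * trace U - trace U * trace V \<in> gen_ideal (relators p q)"
    "U * trace V - trace V * U \<in> gen_ideal (relators p q)"
    "trace U * V - V * trace U \<in> gen_ideal (relators p q)"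
    using central_modD[OF central] central_modD'[OF central] unfolding cong_mod_def by blast+
  ultimately show ?thesis unfolding cong_mod_def by (simp add: gen_ideal.add)
qed

lemma norm_letter: "letter l * star (letter l) \<simeq> scal (coeff (if l then q else p) 0)"
  and norm_letter': "star (letter l) * letter l \<simeq> scal (coeff (if l then q else p) 0)"
proof -
  have "A * star A - scal (coeff p 0) = - P" "star A * A - scal (coeff p 0) = - P"
    "B * star B - scal (coeff q 0) = - Q" "star B * B - scal (coeff q 0) = - Q"
    by (simp_all add: star_A star_B P_eq Q_eq scal_normalize)
  then show "letter l * star (letter l) \<simeq> scal (coeff (if l then q else p) 0)"
    "star (letter l) * letter l \<simeq> scal (coeff (if l then q else p) 0)"
    by (cases l; simp add: cong_mod_def gen_ideal_uminus gen_ideal.generator)+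
qed

lemma norm_wmon: "\<exists>c. wmon w * star (wmon w) \<simeq> scal c \<and> star (wmon w) * wmon w \<simeq> scal c"
proof (induction w)
  case Nil
  show ?case by (rule exI[of _ 1]) (simp add: wmon_Nil falg_star_one)
next
  case (Cons l w)
  then obtain c where c: "wmon w * star (wmon w) \<simeq> scal c" "star (wmon w) * wmon w \<simeq> scal c"
    by blast
  define n where "n = coeff (if l then q else p) 0"
  let ?L = "letter l" and ?W = "wmon w"
  have "wmon (l # w) * star (wmon (l # w)) = ?L * (?W * star ?W) * star ?L"
    by (simp add: wmon_Cons falg_star_mult mult.assoc)
  also have "\<dots> \<simeq> ?L * scal c * star ?L" by (intro cong_mod_mult cong_mod_refl c)
  also have "\<dots> = scal c * (?L * star ?L)" by (simp add: scal_normalize)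
  also have "\<dots> \<simeq> scal c * scal n" unfolding n_def by (intro cong_mod_mult cong_mod_refl norm_letter)
  finally have left: "wmon (l # w) * star (wmon (l # w)) \<simeq> scal (c * n)" by (simp add: scal_mult)
  have "star (wmon (l # w)) * wmon (l # w) = star ?W * (star ?L * ?L) * ?W"
    by (simp add: wmon_Cons falg_star_mult mult.assoc)
  also have "\<dots> \<simeq> star ?W * scal n * ?W"
    unfolding n_def by (intro cong_mod_mult cong_mod_refl norm_letter')
  also have "\<dots> = scal n * (star ?W * ?W)" by (simp add: scal_normalize)
  also have "\<dots> \<simeq> scal n * scal c" by (intro cong_mod_mult cong_mod_refl c)
  finally have right: "star (wmon (l # w)) * wmon (l # w) \<simeq> scal (c * n)"
    by (simp add: scal_mult mult.commute)
  from left right show ?case by blast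
qed

definition has_Fomega_norm :: "'a falg \<Rightarrow> bool" where
  "has_Fomega_norm X \<longleftrightarrow> (\<exists>f. X * star X \<simeq> poly_at f omega \<and> star X * X \<simeq> poly_at f omega)"

lemma has_Fomega_norm_single: "has_Fomega_norm (Poly_Mapping.single k a)"
proof -
  let ?X = "Poly_Mapping.single k a" and ?W = "wmon (letters k)"
  obtain c where c: "?W * star ?W \<simeq> scal c" "star ?W * ?W \<simeq> scal c"
    using norm_wmon by blast
  have "?X * star ?X = scal a * scal a * (?W * star ?W)"
    by (simp add: single_eq_scal_wmon[of k a] falg_star_mult falg_star_scal scal_normalize)
  also have "\<dots> \<simeq> scal a * scal a * scal c" by (intro cong_mod_mult cong_mod_refl c)
  finally have left: "?X * star ?X \<simeq> poly_at [:a * a * c:] omega"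
    by (simp add: poly_at_const scal_mult)
  have "star ?X * ?X = scal a * scal a * (star ?W * ?W)"
    by (simp add: single_eq_scal_wmon[of k a] falg_star_mult falg_star_scal scal_normalize)
  also have "\<dots> \<simeq> scal a * scal a * scal c" by (intro cong_mod_mult cong_mod_refl c)
  finally have right: "star ?X * ?X \<simeq> poly_at [:a * a * c:] omega"
    by (simp add: poly_at_const scal_mult)
  from left right show ?thesis unfolding has_Fomega_norm_def by blast
qed

lemma has_Fomega_norm_add:
  assumes "has_Fomega_norm X" "has_Fomega_norm Y"
  shows "has_Fomega_norm (X + Y)"
proof -
  obtain f where f: "X * star X \<simeq> poly_at f omega" "star X * X \<simeq> poly_at f omega"
    using assms(1) has_Fomega_norm_def by blast
  obtain g where g: "Y * star Y \<simeq> poly_at g omega" "star Y * Y \<simeq> poly_at g omega"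
    using assms(2) has_Fomega_norm_def by blast
  obtain h where h: "trace (X * star Y) \<simeq> poly_at h omega"
    using in_Fomega_trace in_Fomega_def by blast
  have h': "trace (star Y * X) \<simeq> poly_at h omega" using trace_swap h cong_mod_trans by blast
  have "(X + Y) * star (X + Y) = X * star X + Y * star Y + trace (X * star Y)"
    by (simp add: trace_def falg_star_add falg_star_mult star_star algebra_simps)
  also have "\<dots> \<simeq> poly_at (f + g + h) omega" unfolding poly_at_add by (intro cong_mod_add f g h)
  finally have left: "(X + Y) * star (X + Y) \<simeq> poly_at (f + g + h) omega" .
  have "star (X + Y) * (X + Y) = star X * X + star Y * Y + trace (star Y * X)"
    by (simp add: trace_def falg_star_add falg_star_mult star_star algebra_simps)
  also have "\<dots> \<simeq> poly_at (f + g + h) omega" unfolding poly_at_add by (intro cong_mod_add f g h')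
  finally have right: "star (X + Y) * (X + Y) \<simeq> poly_at (f + g + h) omega" .
  from left right show ?thesis unfolding has_Fomega_norm_def by blast
qed

lemma has_Fomega_norm: "has_Fomega_norm X"
proof (induction X rule: poly_mapping_induct_single)
  case zero
  show ?case unfolding has_Fomega_norm_def by (rule exI[of _ 0]) simp
qed (simp_all add: has_Fomega_norm_single has_Fomega_norm_add)

section \<open>Units and norms\<close>

definition omega_poly :: "'a poly" where
  "omega_poly = [:coeff p 0 + coeff q 0, coeff q 1 - coeff p 1, 1:]"

text \<open>A faithful picture of \<open>\<bbbF>[\<omega>]\<close>: \<open>a\<close> acts as the companion matrix of \<open>p\<close> and \<open>b\<close> as a
  matrix over \<open>\<bbbF>[t]\<close> with trace \<open>-q\<^sub>1\<close> and determinant \<open>q\<^sub>0\<close> (so \<open>q(b) = 0\<close> by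
  Cayley-Hamilton); then \<open>\<omega>\<close> acts as the scalar \<open>omega_poly\<close>, which has degree 2 in \<open>t\<close>.\<close>

definition rep_letter :: "bool \<Rightarrow> 'a poly m2" where
  "rep_letter l = (if l
     then M2 [:0, 1:] ([:0, 1:] * (- [:coeff q 1:] - [:0, 1:]) - [:coeff q 0:])
             1 (- [:coeff q 1:] - [:0, 1:])
     else M2 0 (- [:coeff p 0:]) 1 (- [:coeff p 1:]))"

abbreviation rep :: "'a falg \<Rightarrow> 'a poly m2" where
  "rep \<equiv> m2_const.eval rep_letter"

lemmas rep_simps = m2_const.eval_add m2_const.eval_diff m2_const.eval_uminus m2_const.eval_mult
  m2_const.eval_scal m2_const.eval_letter

lemma rep_P: "rep P = 0"
  by (simp add: P_eq rep_simps) (simp add: rep_letter_def m2_scalar_def m2_eq_iff algebra_simps)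

lemma rep_Q: "rep Q = 0"
  by (simp add: Q_eq rep_simps) (simp add: rep_letter_def m2_scalar_def m2_eq_iff algebra_simps)

lemma rep_cong: "X \<simeq> Y \<Longrightarrow> rep X = rep Y"
  by (rule m2_const.eval_gen_ideal) (auto simp: rep_P rep_Q)

lemma rep_omega: "rep omega = m2_scalar omega_poly"
  by (simp add: omega_eq rep_simps)
    (simp add: rep_letter_def omega_poly_def m2_scalar_def m2_eq_iff algebra_simps)

lemma rep_poly_at_omega: "rep (poly_at f omega) = m2_scalar (f \<circ>\<^sub>p omega_poly)"
  by (rule m2_const_eval_poly_at[OF rep_omega])

end

locale W_pq_field = W_pq p q for p q :: "'a::field poly"
begin

lemma poly_at_omega_unit:
  assumes "poly_at (g * f) omega \<simeq> 1"
  shows "\<exists>c. c \<noteq> 0 \<and> poly_at f omega = scal c"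
proof -
  have "m2_scalar ((g * f) \<circ>\<^sub>p omega_poly) = m2_scalar 1"
    using rep_cong[OF assms] by (simp add: rep_poly_at_omega m2_const.eval_one m2_scalar_1)
  then have "(g * f) \<circ>\<^sub>p omega_poly = 1" by (simp add: m2_scalar_inject)
  then have "degree (g * f) = 0" and "g * f \<noteq> 0"
    using degree_pcompose[of "g * f" omega_poly] by (auto simp: omega_poly_def)
  then have "degree f = 0" "f \<noteq> 0" by (auto simp: degree_mult_eq)
  then have "f = [:coeff f 0:]" "coeff f 0 \<noteq> 0" by (auto elim: degree_eq_zeroE)
  then show ?thesis by (metis poly_at_const)
qed

lemma norm_const_if_invertible:
  assumes "X * Y \<simeq> 1"
  shows "\<exists>c. c \<noteq> 0 \<and> X * star X \<simeq> scal c"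
proof -
  obtain f where f: "X * star X \<simeq> poly_at f omega"
    using has_Fomega_norm has_Fomega_norm_def by blast
  obtain g where g: "Y * star Y \<simeq> poly_at g omega"
    using has_Fomega_norm has_Fomega_norm_def by blast
  have "1 = 1 * star 1" by (simp add: falg_star_one)
  also have "\<dots> \<simeq> (X * Y) * star (X * Y)" by (intro cong_mod_mult cong_star cong_mod_sym[OF assms])
  also have "\<dots> = X * (Y * star Y) * star X" by (simp add: falg_star_mult mult.assoc)
  also have "\<dots> \<simeq> X * poly_at g omega * star X" by (intro cong_mod_mult cong_mod_refl g)
  also have "\<dots> \<simeq> poly_at g omega * X * star X"
    by (intro cong_mod_mult cong_mod_refl central_modD' poly_at_central central_omega)
  also have "\<dots> \<simeq> poly_at g omega * poly_at f omega"
    unfolding mult.assoc by (intro cong_mod_mult cong_mod_refl f)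
  finally have "poly_at (g * f) omega \<simeq> 1" unfolding poly_at_mult by (rule cong_mod_sym)
  then obtain c where "c \<noteq> 0" "poly_at f omega = scal c" using poly_at_omega_unit by blast
  with f show ?thesis by auto
qed

lemma invertible_if_norm_const:
  assumes "c \<noteq> 0" and c: "X * star X \<simeq> scal c"
  shows "X * (scal (inverse c) * star X) \<simeq> 1 \<and> (scal (inverse c) * star X) * X \<simeq> 1"
proof -
  have inverse_c: "scal (inverse c) * scal c = 1" using assms by (simp add: scal_mult)
  obtain f where "X * star X \<simeq> poly_at f omega" "star X * X \<simeq> poly_at f omega"
    using has_Fomega_norm has_Fomega_norm_def by blast
  then have c': "star X * X \<simeq> scal c" using c by (meson cong_mod_sym cong_mod_trans)
  have "X * (scal (inverse c) * star X) = scal (inverse c) * (X * star X)"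
    by (simp add: scal_normalize)
  also have "\<dots> \<simeq> scal (inverse c) * scal c" by (intro cong_mod_mult cong_mod_refl c)
  finally have right_inverse: "X * (scal (inverse c) * star X) \<simeq> 1" by (simp only: inverse_c)
  have "(scal (inverse c) * star X) * X = scal (inverse c) * (star X * X)" by (simp add: mult.assoc)
  also have "\<dots> \<simeq> scal (inverse c) * scal c" by (intro cong_mod_mult cong_mod_refl c')
  finally have "(scal (inverse c) * star X) * X \<simeq> 1" by (simp only: inverse_c)
  with right_inverse show ?thesis by blast
qed

theorem invertible_iff_norm:
  "(\<exists>Y. X * Y \<simeq> 1 \<and> Y * X \<simeq> 1) \<longleftrightarrow> (\<exists>c. c \<noteq> 0 \<and> X * star X \<simeq> scal c)"
  using norm_const_if_invertible invertible_if_norm_const by blast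

end

theorem mainTheorem17:
  fixes p q :: "'a::field poly" and x :: "'a fa"
  assumes "degree p = 2" and "lead_coeff p = 1"
    and "degree q = 2" and "lead_coeff q = 1"
    and "fin_supp x"
  shows "w_invertible p q x \<longleftrightarrow>
           (\<exists>c. c \<noteq> 0 \<and> fsub (wnorm p q x) (fscal c) \<in> wideal p q)"
proof -
  interpret W_pq_field p q
    using assms by unfold_locales auto
  show ?thesis
    using assms(5) by (simp add: w_invertible_iff wnorm_in_wideal_iff invertible_iff_norm)
qed

end
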